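(* Let $\varepsilon \in [0,1]$ and let $w_1, w_2 \in \mathbb{S}^{n-1}$ satisfy $\|w_1 - w_2\| \leq 1 - \varepsilon^2/2$. Let $v_1, v \in \mathbb{R}^n$ satisfy $\langle w_1, v_1\rangle \geq 1$, $\langle w_2, v\rangle \geq \langle w_2, v_1\rangle$, and $\|v_1\|, \|v\| \leq (1-\varepsilon^2/2)^{-1}$. Let $a \in \mathbb{S}^{n-1}$ satisfy $\langle a, v\rangle \geq 1$. Then $\|w_2 - a\| \leq 2\varepsilon + \|w_1 - w_2\|$.
   Context: $\|\cdot\|$ is the Euclidean norm and $\mathbb{S}^{n-1}$ the Euclidean unit sphere in $\mathbb{R}^n$. *)

theory Defs
  imports "HOL-Analysis.Analysis"
begin

end

theory Submission
  imports Defs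
begin

text \<open>Write \<open>c = 1 - \<epsilon>\<^sup>2/2\<close>, \<open>d = \<parallel>w\<^sub>1 - w\<^sub>2\<parallel>\<close> and \<open>u = v/\<parallel>v\<parallel>\<close>. For unit vectors,
  \<open>x \<bullet> y \<ge> 1 - r\<^sup>2/2\<close> means \<open>\<parallel>x - y\<parallel> \<le> r\<close>. Since \<open>\<parallel>v\<parallel> \<le> 1/c\<close>, we get \<open>a \<bullet> u \<ge> c\<close>, so
  \<open>\<parallel>a - u\<parallel> \<le> \<epsilon>\<close>. Splitting \<open>w\<^sub>2\<close> and \<open>v\<^sub>1\<close> into components along \<open>w\<^sub>1\<close> and orthogonal to it,
  the orthogonal parts have norms at most \<open>d\<close> and \<open>\<epsilon>/c\<close>, which yields
  \<open>w\<^sub>2 \<bullet> u \<ge> c (w\<^sub>2 \<bullet> v\<^sub>1) \<ge> c (w\<^sub>1 \<bullet> w\<^sub>2) - \<epsilon> d \<ge> 1 - (\<epsilon> + d)\<^sup>2/2\<close>, i.e. \<open>\<parallel>w\<^sub>2 - u\<parallel> \<le> \<epsilon> + d\<close>.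
  The triangle inequality concludes.\<close>

lemma norm_diff_sq_unit:
  fixes x y :: "'a::real_inner"
  assumes "norm x = 1" "norm y = 1"
  shows "(norm (x - y))\<^sup>2 = 2 - 2 * (x \<bullet> y)"
  using assms by (simp add: power2_norm_eq_inner inner_diff inner_commute norm_eq_1)

lemma norm_diff_unit_le_of_inner_ge:
  fixes x y :: "'a::real_inner"
  assumes "norm x = 1" "norm y = 1" "0 \<le> r" "1 - r\<^sup>2 / 2 \<le> x \<bullet> y"
  shows "norm (x - y) \<le> r"
proof -
  have "(norm (x - y))\<^sup>2 \<le> r\<^sup>2"
    using norm_diff_sq_unit[OF assms(1,2)] assms(4) by simp
  then show ?thesis
    using assms(3) by (meson norm_ge_zero power2_le_imp_le)
qed

lemma inner_eq_projection_plus_orthogonal: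
  fixes w x y :: "'a::real_inner"
  assumes "norm w = 1"
  shows "y \<bullet> x = (w \<bullet> y) * (w \<bullet> x) + (y - (w \<bullet> y) *\<^sub>R w) \<bullet> (x - (w \<bullet> x) *\<^sub>R w)"
  using assms by (simp add: inner_diff inner_commute norm_eq_1 algebra_simps)

lemma norm_orthogonal_part_sq:
  fixes w x :: "'a::real_inner"
  assumes "norm w = 1"
  shows "(norm (x - (w \<bullet> x) *\<^sub>R w))\<^sup>2 = (norm x)\<^sup>2 - (w \<bullet> x)\<^sup>2"
  using inner_eq_projection_plus_orthogonal[OF assms, of x x]
  unfolding power2_norm_eq_inner by (simp add: power2_eq_square)

lemma mult_inner_le_inner_sgn:
  fixes x v :: "'a::real_inner"
  assumes "0 \<le> x \<bullet> v" "c * norm v \<le> 1"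
  shows "c * (x \<bullet> v) \<le> x \<bullet> sgn v"
proof (cases "v = 0")
  case False
  have "c * (x \<bullet> v) * norm v \<le> x \<bullet> v"
    using mult_right_mono[OF assms(2) assms(1)] by (simp add: algebra_simps)
  then show ?thesis
    using False by (simp add: sgn_div_norm field_simps)
qed simp

text \<open>The key estimate: a unit vector \<open>w\<^sub>2\<close> close to \<open>w\<^sub>1\<close> still has large inner product with
  any \<open>v\<^sub>1\<close> satisfying \<open>w\<^sub>1 \<bullet> v\<^sub>1 \<ge> 1\<close> and \<open>\<parallel>v\<^sub>1\<parallel> \<le> 1/c\<close>, because such \<open>v\<^sub>1\<close> has orthogonal
  part of norm at most \<open>\<epsilon>/c\<close>.\<close>

lemma inner_lower_bound_of_near_unit:
  fixes w1 w2 v1 :: "'a::real_inner"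
  assumes "norm w1 = 1" "norm w2 = 1" "0 \<le> w1 \<bullet> w2" "1 \<le> w1 \<bullet> v1"
    and "0 \<le> \<epsilon>" "\<epsilon> \<le> 1" "(1 - \<epsilon>\<^sup>2 / 2) * norm v1 \<le> 1"
  shows "(1 - \<epsilon>\<^sup>2 / 2) * (w1 \<bullet> w2) - \<epsilon> * norm (w1 - w2) \<le> (1 - \<epsilon>\<^sup>2 / 2) * (w2 \<bullet> v1)"
proof -
  define c where "c = 1 - \<epsilon>\<^sup>2 / 2"
  define p where "p = w1 \<bullet> w2"
  define t where "t = w1 \<bullet> v1"
  define Q where "Q = norm (w2 - p *\<^sub>R w1)"
  define R where "R = norm (v1 - t *\<^sub>R w1)"
  have c: "0 \<le> c" "c * norm v1 \<le> 1"
    using assms(5-7) power_le_one[of \<epsilon> 2] by (auto simp: c_def)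
  have "w2 \<bullet> v1 \<ge> p * t - Q * R"
    using inner_eq_projection_plus_orthogonal[OF assms(1), of w2 v1]
      Cauchy_Schwarz_ineq2[of "w2 - p *\<^sub>R w1" "v1 - t *\<^sub>R w1"]
    unfolding p_def t_def Q_def R_def by linarith
  moreover have "p \<le> p * t"
    using assms(3,4) by (simp add: p_def t_def mult_le_cancel_left1)
  ultimately have inner_ge: "w2 \<bullet> v1 \<ge> p - Q * R"
    by linarith
  have "Q\<^sup>2 = 1 - p\<^sup>2"
    using norm_orthogonal_part_sq[OF assms(1), of w2] assms(2) by (simp add: Q_def p_def)
  also have "\<dots> \<le> 2 - 2 * p"
    using zero_le_power2[of "1 - p"] by (simp add: power2_eq_square algebra_simps)
  also have "\<dots> = (norm (w1 - w2))\<^sup>2"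
    using norm_diff_sq_unit[OF assms(1,2)] by (simp add: p_def)
  finally have "Q\<^sup>2 \<le> (norm (w1 - w2))\<^sup>2" .
  then have Q_le: "Q \<le> norm (w1 - w2)"
    by (rule power2_le_imp_le) simp
  have "(c * R)\<^sup>2 = c\<^sup>2 * ((norm v1)\<^sup>2 - t\<^sup>2)"
    using norm_orthogonal_part_sq[OF assms(1), of v1]
    by (simp add: R_def t_def power_mult_distrib)
  also have "\<dots> = (c * norm v1)\<^sup>2 - c\<^sup>2 * t\<^sup>2"
    by (simp add: power_mult_distrib right_diff_distrib)
  also have "\<dots> \<le> 1 - c\<^sup>2"
  proof -
    have "1 \<le> t\<^sup>2"
      using assms(4) by (simp add: t_def one_le_power)
    then have "c\<^sup>2 \<le> c\<^sup>2 * t\<^sup>2"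
      using mult_left_mono[of 1 "t\<^sup>2" "c\<^sup>2"] by simp
    moreover have "(c * norm v1)\<^sup>2 \<le> 1"
      using c power_mono[of "c * norm v1" 1 2] by simp
    ultimately show ?thesis
      by linarith
  qed
  also have "\<dots> \<le> \<epsilon>\<^sup>2"
    using zero_le_power2[of "\<epsilon>\<^sup>2"] by (simp add: c_def power2_eq_square algebra_simps)
  finally have cR_le: "c * R \<le> \<epsilon>"
    using assms(5) by (meson power2_le_imp_le)
  have "Q * (c * R) \<le> norm (w1 - w2) * \<epsilon>"
    using Q_le cR_le by (rule mult_mono) (simp_all add: Q_def R_def c(1))
  moreover have "c * (p - Q * R) \<le> c * (w2 \<bullet> v1)"
    using inner_ge c(1) by (rule mult_left_mono)
  ultimately have "c * p - \<epsilon> * norm (w1 - w2) \<le> c * (w2 \<bullet> v1)"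
    by (simp add: algebra_simps)
  then show ?thesis
    by (simp only: c_def p_def)
qed

lemma norm_diff_sgn_le_of_inner_ge:
  fixes a v :: "'a::real_inner"
  assumes "norm a = 1" "1 \<le> a \<bullet> v" "0 \<le> \<epsilon>" "\<epsilon> \<le> 1" "(1 - \<epsilon>\<^sup>2 / 2) * norm v \<le> 1"
  shows "norm (a - sgn v) \<le> \<epsilon>"
proof (rule norm_diff_unit_le_of_inner_ge[OF assms(1) _ assms(3)])
  show "norm (sgn v) = 1"
    using assms(2) by (auto simp: norm_sgn)
  have "0 \<le> 1 - \<epsilon>\<^sup>2 / 2"
    using assms(3,4) power_le_one[of \<epsilon> 2] by simp
  then have "1 - \<epsilon>\<^sup>2 / 2 \<le> (1 - \<epsilon>\<^sup>2 / 2) * (a \<bullet> v)"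
    using assms(2) mult_left_mono[of 1 "a \<bullet> v"] by simp
  also have "\<dots> \<le> a \<bullet> sgn v"
    using mult_inner_le_inner_sgn[OF _ assms(5)] assms(2) by simp
  finally show "1 - \<epsilon>\<^sup>2 / 2 \<le> a \<bullet> sgn v" .
qed

lemma norm_diff_sgn_le_of_near_unit:
  fixes w1 w2 v1 v :: "'a::real_inner"
  assumes "norm w1 = 1" "norm w2 = 1" "norm (w1 - w2) \<le> 1 - \<epsilon>\<^sup>2 / 2"
    and "1 \<le> w1 \<bullet> v1" "w2 \<bullet> v1 \<le> w2 \<bullet> v" "0 \<le> \<epsilon>" "\<epsilon> \<le> 1"
    and "(1 - \<epsilon>\<^sup>2 / 2) * norm v1 \<le> 1" "(1 - \<epsilon>\<^sup>2 / 2) * norm v \<le> 1" "v \<noteq> 0"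
  shows "norm (w2 - sgn v) \<le> \<epsilon> + norm (w1 - w2)"
proof -
  define c where "c = 1 - \<epsilon>\<^sup>2 / 2"
  define d where "d = norm (w1 - w2)"
  have c_pos: "0 < c" and d_le: "d \<le> c" "c \<le> 1"
    using assms(3,6,7) power_le_one[of \<epsilon> 2] by (auto simp: c_def d_def)
  have p_eq: "w1 \<bullet> w2 = 1 - d\<^sup>2 / 2"
    using norm_diff_sq_unit[OF assms(1,2)] unfolding d_def by linarith
  have "d\<^sup>2 \<le> 1"
    using d_le by (simp add: d_def power_le_one)
  then have p_nonneg: "0 \<le> w1 \<bullet> w2"
    using p_eq by simp
  have "w2 \<bullet> v1 \<ge> 0"
  proof -
    have "\<bar>(w2 - w1) \<bullet> v1\<bar> \<le> d * norm v1"
      using Cauchy_Schwarz_ineq2[of "w2 - w1" v1] by (simp add: d_def norm_minus_commute)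
    also have "\<dots> \<le> c * norm v1"
      using d_le(1) by (simp add: mult_right_mono)
    also have "\<dots> \<le> 1"
      using assms(8) by (simp add: c_def)
    finally show ?thesis
      using assms(4) by (simp add: inner_diff_left abs_le_iff)
  qed
  then have "c * (w2 \<bullet> v1) \<le> c * (w2 \<bullet> v)"
    using assms(5) c_pos by (simp add: mult_left_mono)
  also have "\<dots> \<le> w2 \<bullet> sgn v"
    using mult_inner_le_inner_sgn[OF _ assms(9), of w2] \<open>w2 \<bullet> v1 \<ge> 0\<close> assms(5)
    by (simp add: c_def)
  finally have "c * (w2 \<bullet> v1) \<le> w2 \<bullet> sgn v" .
  moreover have "c * (w1 \<bullet> w2) - \<epsilon> * d \<le> c * (w2 \<bullet> v1)"
    using inner_lower_bound_of_near_unit[OF assms(1,2) p_nonneg assms(4,6,7,8)]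
    by (simp add: c_def d_def)
  moreover have "c * (w1 \<bullet> w2) - \<epsilon> * d = 1 - (\<epsilon> + d)\<^sup>2 / 2 + (\<epsilon> * d)\<^sup>2 / 4"
    unfolding p_eq c_def by (simp add: power2_eq_square field_simps)
  ultimately have "1 - (\<epsilon> + d)\<^sup>2 / 2 \<le> w2 \<bullet> sgn v"
    using zero_le_power2[of "\<epsilon> * d"] by linarith
  then show ?thesis
    using norm_diff_unit_le_of_inner_ge[OF assms(2)] assms(6,10)
    by (simp add: d_def norm_sgn)
qed

theorem lemma3p6:
  fixes \<epsilon> :: real and w1 w2 v1 v a :: "real ^ 'n"
  assumes "0 \<le> \<epsilon>" "\<epsilon> \<le> 1"
    and "norm w1 = 1" "norm w2 = 1"
    and "norm (w1 - w2) \<le> 1 - \<epsilon>\<^sup>2 / 2"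
    and "w1 \<bullet> v1 \<ge> 1"
    and "w2 \<bullet> v \<ge> w2 \<bullet> v1"
    and "norm v1 \<le> inverse (1 - \<epsilon>\<^sup>2 / 2)"
    and "norm v \<le> inverse (1 - \<epsilon>\<^sup>2 / 2)"
    and "norm a = 1"
    and "a \<bullet> v \<ge> 1"
  shows "norm (w2 - a) \<le> 2 * \<epsilon> + norm (w1 - w2)"
proof -
  have "0 < 1 - \<epsilon>\<^sup>2 / 2"
    using assms(1,2) power_le_one[of \<epsilon> 2] by simp
  then have v1_bound: "(1 - \<epsilon>\<^sup>2 / 2) * norm v1 \<le> 1" and v_bound: "(1 - \<epsilon>\<^sup>2 / 2) * norm v \<le> 1"
    using assms(8,9) by (simp_all add: field_simps)
  have "v \<noteq> 0"
    using assms(11) by auto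
  then have "norm (w2 - sgn v) \<le> \<epsilon> + norm (w1 - w2)"
    using norm_diff_sgn_le_of_near_unit[OF assms(3,4,5,6,7,1,2) v1_bound v_bound] by blast
  moreover have "norm (a - sgn v) \<le> \<epsilon>"
    using norm_diff_sgn_le_of_inner_ge[OF assms(10,11,1,2) v_bound] .
  ultimately show ?thesis
    using norm_triangle_ineq[of "w2 - sgn v" "sgn v - a"] by (simp add: norm_minus_commute)
qed

end
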